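(* Let $\mathcal H$ be a real Hilbert space, $t_0>0$, let $f:\mathcal H\to\mathbb R$ be a convex function of class $\mathcal C^2(\mathcal H)$ with $S:=\operatorname{argmin}_{\mathcal H} f\neq\emptyset$, and let $e:[t_0,+\infty[\to\mathcal H$ be continuously differentiable. Suppose $\alpha\ge 0$ and $\beta>0$, and let $(x_0,\dot x_0)\in\mathcal H\times\mathcal H$. The following statements are equivalent: 1. $x:[t_0,+\infty[\to\mathcal H$ is a solution trajectory of $$\ddot x(t)+\frac{\alpha}{t}\dot x(t)+\beta\frac{d}{dt}\big(\nabla f(x(t))+e(t)\big)+\nabla f(x(t))+e(t)=0$$ with initial conditions $x(t_0)=x_0$, $\dot x(t_0)=\dot x_0$. 2. $(x,y):[t_0,+\infty[\to\mathcal H\times\mathcal H$ is a solution trajectory of the first-order system $$\begin{cases}\dot x(t)+\beta(\nabla f(x(t))+e(t))-\left(\frac1\beta-\frac\alpha t\right)x(t)+\frac1\beta y(t)=0,\\[2pt] \dot y(t)-\left(\frac1\beta-\frac\alpha t+\frac{\alpha\beta}{t^2}\right)x(t)+\frac1\beta y(t)=0,\end{cases}$$ with initial conditions $x(t_0)=x_0$ and $y(t_0)=-\beta(\dot x_0+\beta\nabla f(x_0))+(1-\beta\alpha/t_0)x_0-\beta^2e(t_0)$.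
   Context: Standing assumption of the paper: $f$ is convex on $\mathcal H$ and its set of minimizers $S$ is nonempty. *)

theory Defs
  imports "HOL-Analysis.Analysis"
begin

definition sol_second_order ::
  "('a::real_normed_vector \<Rightarrow> 'a) \<Rightarrow> (real \<Rightarrow> 'a) \<Rightarrow> real \<Rightarrow> real \<Rightarrow> real \<Rightarrow> 'a \<Rightarrow> 'a
   \<Rightarrow> (real \<Rightarrow> 'a) \<Rightarrow> bool" where
  "sol_second_order gf e \<alpha> \<beta> t0 x0 x1 x \<longleftrightarrow>
     (\<exists>x' x'' g'.
        (\<forall>t\<ge>t0. (x has_vector_derivative x' t) (at t within {t0..})
               \<and> (x' has_vector_derivative x'' t) (at t within {t0..})
               \<and> ((\<lambda>s. gf (x s) + e s) has_vector_derivative g' t) (at t within {t0..})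
               \<and> x'' t + (\<alpha> / t) *\<^sub>R x' t + \<beta> *\<^sub>R g' t + gf (x t) + e t = 0)
      \<and> x t0 = x0 \<and> x' t0 = x1)"

definition sol_first_order ::
  "('a::real_normed_vector \<Rightarrow> 'a) \<Rightarrow> (real \<Rightarrow> 'a) \<Rightarrow> real \<Rightarrow> real \<Rightarrow> real \<Rightarrow> 'a \<Rightarrow> 'a
   \<Rightarrow> (real \<Rightarrow> 'a) \<Rightarrow> (real \<Rightarrow> 'a) \<Rightarrow> bool" where
  "sol_first_order gf e \<alpha> \<beta> t0 x0 x1 x y \<longleftrightarrow>
     (\<exists>x' y'.
        (\<forall>t\<ge>t0. (x has_vector_derivative x' t) (at t within {t0..})
               \<and> (y has_vector_derivative y' t) (at t within {t0..})
               \<and> x' t + \<beta> *\<^sub>R (gf (x t) + e t) - (1/\<beta> - \<alpha>/t) *\<^sub>R x t + (1/\<beta>) *\<^sub>R y t = 0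
               \<and> y' t - (1/\<beta> - \<alpha>/t + \<alpha> * \<beta> / t\<^sup>2) *\<^sub>R x t + (1/\<beta>) *\<^sub>R y t = 0)
      \<and> x t0 = x0
      \<and> y t0 = - \<beta> *\<^sub>R (x1 + \<beta> *\<^sub>R gf x0) + (1 - \<beta> * \<alpha> / t0) *\<^sub>R x0 - \<beta>\<^sup>2 *\<^sub>R e t0)"

end

theory Submission
  imports Defs
begin

text \<open>The first-order system arises from the new variable
  \<open>y = (1 - \<alpha>\<beta>/t) x - \<beta> x' - \<beta>\<^sup>2 (\<nabla>f(x) + e)\<close>: its definition, solved for \<open>x'\<close>,
  is the first equation, and differentiating it and inserting the second-order
  equation gives the second one. Conversely, the first equation expresses \<open>x'\<close> through
  \<open>x\<close>, \<open>y\<close> and \<open>\<nabla>f(x) + e\<close>, which are differentiable (the latter by the chain rule),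
  so \<open>x\<close> is twice differentiable, and differentiating the first equation and
  eliminating \<open>y\<close> and \<open>y'\<close> gives back the second-order equation.\<close>

lemma has_real_derivative_const_minus_divide:
  assumes "t \<noteq> 0"
  shows "((\<lambda>s. a - b / s) has_real_derivative b / t\<^sup>2) (at t within S)"
  using assms by (auto intro!: derivative_eq_intros simp: power2_eq_square)

lemma second_order_imp_first_order:
  fixes gf :: "'a::real_normed_vector \<Rightarrow> 'a"
  assumes t0: "t0 > 0" and \<beta>: "\<beta> \<noteq> 0"
    and sol: "sol_second_order gf e \<alpha> \<beta> t0 x0 x1 x"
  shows "\<exists>y. sol_first_order gf e \<alpha> \<beta> t0 x0 x1 x y"
proof -
  obtain x' x'' g' where
    dx: "\<And>t. t \<ge> t0 \<Longrightarrow> (x has_vector_derivative x' t) (at t within {t0..})" and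
    dx': "\<And>t. t \<ge> t0 \<Longrightarrow> (x' has_vector_derivative x'' t) (at t within {t0..})" and
    dg: "\<And>t. t \<ge> t0 \<Longrightarrow> ((\<lambda>s. gf (x s) + e s) has_vector_derivative g' t) (at t within {t0..})" and
    eq: "\<And>t. t \<ge> t0 \<Longrightarrow> x'' t + (\<alpha> / t) *\<^sub>R x' t + \<beta> *\<^sub>R g' t + gf (x t) + e t = 0" and
    init: "x t0 = x0" "x' t0 = x1"
    using sol unfolding sol_second_order_def by blast
  define y where "y t = (1 - \<alpha>*\<beta>/t) *\<^sub>R x t - \<beta> *\<^sub>R x' t - \<beta>\<^sup>2 *\<^sub>R (gf (x t) + e t)" for t
  define y' where "y' t = (1 - \<alpha>*\<beta>/t) *\<^sub>R x' t + (\<alpha>*\<beta>/t\<^sup>2) *\<^sub>R x t - \<beta> *\<^sub>R x'' t - \<beta>\<^sup>2 *\<^sub>R g' t" for t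
  have "sol_first_order gf e \<alpha> \<beta> t0 x0 x1 x y"
    unfolding sol_first_order_def
  proof (intro exI conjI allI impI)
    fix t assume t: "t \<ge> t0"
    with t0 have "t \<noteq> 0" by simp
    show "(x has_vector_derivative x' t) (at t within {t0..})" using dx[OF t] .
    show "(y has_vector_derivative y' t) (at t within {t0..})"
      unfolding y_def[abs_def] y'_def
      using has_vector_derivative_diff[OF has_vector_derivative_diff[OF
          has_vector_derivative_scaleR[OF has_real_derivative_const_minus_divide[OF \<open>t \<noteq> 0\<close>] dx[OF t]]
          has_vector_derivative_scaleR[OF DERIV_const dx'[OF t]]]
          has_vector_derivative_scaleR[OF DERIV_const dg[OF t]]]
      by simp
    show "x' t + \<beta> *\<^sub>R (gf (x t) + e t) - (1/\<beta> - \<alpha>/t) *\<^sub>R x t + (1/\<beta>) *\<^sub>R y t = 0"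
      using \<beta> by (simp add: y_def algebra_simps power2_eq_square)
    have "y' t - (1/\<beta> - \<alpha>/t + \<alpha> * \<beta> / t\<^sup>2) *\<^sub>R x t + (1/\<beta>) *\<^sub>R y t
        = - \<beta> *\<^sub>R (x'' t + (\<alpha> / t) *\<^sub>R x' t + \<beta> *\<^sub>R g' t + gf (x t) + e t)"
      using \<beta> \<open>t \<noteq> 0\<close> by (simp add: y_def y'_def algebra_simps power2_eq_square)
    then show "y' t - (1/\<beta> - \<alpha>/t + \<alpha> * \<beta> / t\<^sup>2) *\<^sub>R x t + (1/\<beta>) *\<^sub>R y t = 0"
      using eq[OF t] by simp
  next
    show "x t0 = x0" by (fact init)
    show "y t0 = - \<beta> *\<^sub>R (x1 + \<beta> *\<^sub>R gf x0) + (1 - \<beta> * \<alpha> / t0) *\<^sub>R x0 - \<beta>\<^sup>2 *\<^sub>R e t0"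
      by (simp add: y_def init algebra_simps power2_eq_square)
  qed
  then show ?thesis by blast
qed

lemma first_order_imp_second_order:
  fixes gf :: "'a::real_normed_vector \<Rightarrow> 'a"
  assumes t0: "t0 > 0" and \<beta>: "\<beta> \<noteq> 0"
    and gf_deriv: "\<And>u. (gf has_derivative G u) (at u)"
    and e_deriv: "\<And>t. t \<ge> t0 \<Longrightarrow> (e has_vector_derivative e' t) (at t within {t0..})"
    and sol: "sol_first_order gf e \<alpha> \<beta> t0 x0 x1 x y"
  shows "sol_second_order gf e \<alpha> \<beta> t0 x0 x1 x"
proof -
  obtain x' y' where
    dx: "\<And>t. t \<ge> t0 \<Longrightarrow> (x has_vector_derivative x' t) (at t within {t0..})" and
    dy: "\<And>t. t \<ge> t0 \<Longrightarrow> (y has_vector_derivative y' t) (at t within {t0..})" and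
    eq1: "\<And>t. t \<ge> t0 \<Longrightarrow>
      x' t + \<beta> *\<^sub>R (gf (x t) + e t) - (1/\<beta> - \<alpha>/t) *\<^sub>R x t + (1/\<beta>) *\<^sub>R y t = 0" and
    eq2: "\<And>t. t \<ge> t0 \<Longrightarrow>
      y' t - (1/\<beta> - \<alpha>/t + \<alpha> * \<beta> / t\<^sup>2) *\<^sub>R x t + (1/\<beta>) *\<^sub>R y t = 0" and
    init: "x t0 = x0"
      "y t0 = - \<beta> *\<^sub>R (x1 + \<beta> *\<^sub>R gf x0) + (1 - \<beta> * \<alpha> / t0) *\<^sub>R x0 - \<beta>\<^sup>2 *\<^sub>R e t0"
    using sol unfolding sol_first_order_def by blast
  define xp where "xp t = (1/\<beta> - \<alpha>/t) *\<^sub>R x t - (1/\<beta>) *\<^sub>R y t - \<beta> *\<^sub>R (gf (x t) + e t)" for t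
  define g' where "g' t = G (x t) (xp t) + e' t" for t
  define xpp where "xpp t = (1/\<beta> - \<alpha>/t) *\<^sub>R xp t + (\<alpha> / t\<^sup>2) *\<^sub>R x t
      - (1/\<beta>) *\<^sub>R y' t - \<beta> *\<^sub>R g' t" for t
  show ?thesis
    unfolding sol_second_order_def
  proof (intro exI conjI allI impI)
    fix t assume t: "t \<ge> t0"
    with t0 have "t \<noteq> 0" by simp
    have "x' t = xp t"
      using eq1[OF t] by (simp add: xp_def algebra_simps)
    then show dx_xp: "(x has_vector_derivative xp t) (at t within {t0..})"
      using dx[OF t] by simp
    have "((gf \<circ> x) has_vector_derivative G (x t) (xp t)) (at t within {t0..})"
      using vector_derivative_diff_chain_within[OF dx_xp has_derivative_at_withinI[OF gf_deriv]] .
    then show dg: "((\<lambda>s. gf (x s) + e s) has_vector_derivative g' t) (at t within {t0..})"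
      using has_vector_derivative_add[OF _ e_deriv[OF t]] by (simp add: g'_def o_def)
    show "(xp has_vector_derivative xpp t) (at t within {t0..})"
      unfolding xp_def[abs_def] xpp_def
      using has_vector_derivative_diff[OF has_vector_derivative_diff[OF
          has_vector_derivative_scaleR[OF has_real_derivative_const_minus_divide[OF \<open>t \<noteq> 0\<close>] dx_xp[unfolded xp_def]]
          has_vector_derivative_scaleR[OF DERIV_const dy[OF t]]]
          has_vector_derivative_scaleR[OF DERIV_const dg]]
      by simp
    have y'_eq: "y' t = (1/\<beta> - \<alpha>/t + \<alpha> * \<beta> / t\<^sup>2) *\<^sub>R x t - (1/\<beta>) *\<^sub>R y t"
      using eq2[OF t] by (simp add: algebra_simps)
    show "xpp t + (\<alpha> / t) *\<^sub>R xp t + \<beta> *\<^sub>R g' t + gf (x t) + e t = 0"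
      using \<beta> \<open>t \<noteq> 0\<close> by (simp add: xpp_def xp_def y'_eq algebra_simps power2_eq_square)
  next
    show "x t0 = x0" by (fact init)
    show "xp t0 = x1"
      using \<beta> t0 by (simp add: xp_def init algebra_simps power2_eq_square)
  qed
qed

theorem theorem1:
  fixes f :: "'a::{real_inner, complete_space} \<Rightarrow> real"
    and gf :: "'a \<Rightarrow> 'a"
    and Hf :: "'a \<Rightarrow> ('a \<Rightarrow>\<^sub>L 'a)"
    and e e' :: "real \<Rightarrow> 'a"
    and t0 \<alpha> \<beta> :: real
    and x0 x1 :: 'a
    and x :: "real \<Rightarrow> 'a"
  assumes t0: "t0 > 0"
    and convex: "convex_on UNIV f"
    and argmin: "\<exists>z. \<forall>w. f z \<le> f w"
    and grad: "\<And>u. (f has_derivative (\<lambda>h. gf u \<bullet> h)) (at u)"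
    and hess: "\<And>u. (gf has_derivative blinfun_apply (Hf u)) (at u)"
    and hess_cont: "continuous_on UNIV Hf"
    and e_deriv: "\<And>t. t \<ge> t0 \<Longrightarrow> (e has_vector_derivative e' t) (at t within {t0..})"
    and e'_cont: "continuous_on {t0..} e'"
    and \<alpha>: "\<alpha> \<ge> 0"
    and \<beta>: "\<beta> > 0"
  shows "sol_second_order gf e \<alpha> \<beta> t0 x0 x1 x \<longleftrightarrow>
         (\<exists>y. sol_first_order gf e \<alpha> \<beta> t0 x0 x1 x y)"
proof -
  have "\<beta> \<noteq> 0" using \<beta> by simp
  show ?thesis
    using second_order_imp_first_order[OF t0 \<open>\<beta> \<noteq> 0\<close>]
      first_order_imp_second_order[OF t0 \<open>\<beta> \<noteq> 0\<close> hess e_deriv]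
    by blast
qed

end
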